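(* Fix signs $\epsilon_1,\dots,\epsilon_5\in\{\pm1\}$ and let $\mathcal R$ be a 5-linear operator such that for all $v_1,\dots,v_5$, $$|\widetilde{\mathcal R}(k,\lambda)|\lesssim\frac1{\langle\lambda\rangle^{1+10\delta}}\sum_{\epsilon_1k_1+\dots+\epsilon_5k_5=k}\beta(k,k_1,\dots,k_5)\int_{\mathbb R^5}\prod_{j=1}^5|\widetilde{v_j}(k_j,\lambda_j)|\,d\lambda_1\cdots d\lambda_5,$$ where $\beta$ is supported where $\langle k\rangle\gtrsim\langle k_5\rangle$ and satisfies $$|\beta|\lesssim\langle k^+\rangle^{\sqrt\delta}\frac1{\langle k\rangle\langle\epsilon_3k_3+\epsilon_4k_4\rangle},\qquad|k^+|=\max(|k|,|k_1|,\dots,|k_5|).$$ Then $\|\mathcal R\|_{Z_1}\lesssim\prod_{j=1}^5\|v_j\|_{Y_0}$.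
   Context: $\mathbb T=\mathbb R/2\pi\mathbb Z$, $\langle x\rangle=\sqrt{1+|x|^2}$; space-time Fourier transform $\widehat u(k,\xi)=\frac1{(2\pi)^2}\int e^{-i(kx+\xi t)}u\,dt\,dx$, $\widetilde u(k,\lambda)=\widehat u(k,\lambda-k^2)$. $\|u\|_{X^{s,b}_{p,q}}=\|\langle k\rangle^s\langle\xi+k^2\rangle^b\widehat u(k,\xi)\|_{\ell^p_kL^q_\xi}$. Fix $2\le p_0<\infty$, $0<\delta\ll1$ small depending on $p_0$; $b_1=1-\delta$, $q_0=\frac1{4\delta}$, $\frac1{r_0}=\frac12+\delta$; $Y_0=X^{1/2,1/2}_{p_0,r_0}$, $Z_1=X^{1/2,b_1}_{p_0,q_0}$. Implicit constants in the conclusion depend on $p_0,\delta$ and the constants in the hypotheses. *)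

theory Defs
  imports "HOL-Analysis.Analysis" "HOL-Probability.Probability"
begin

definition jb :: "real \<Rightarrow> real" where
  "jb x = sqrt (1 + x\<^sup>2)"

definition epow :: "ennreal \<Rightarrow> real \<Rightarrow> ennreal" where
  "epow x r = (if x = \<top> then \<top> else ennreal (enn2real x powr r))"

(* Space-time functions on <real> <times> <T> are represented by their space-time Fourier
  transforms u<^sup>^ :: int <Rightarrow> real <Rightarrow> complex, (k,<xi>) <mapsto> u<^sup>^(k,<xi>). *)
definition tilde :: "(int \<Rightarrow> real \<Rightarrow> complex) \<Rightarrow> int \<Rightarrow> real \<Rightarrow> complex" where
  "tilde u k lam = u k (lam - (real_of_int k)\<^sup>2)"

definition Lqk :: "real \<Rightarrow> real \<Rightarrow> real \<Rightarrow> (int \<Rightarrow> real \<Rightarrow> complex) \<Rightarrow> int \<Rightarrow> ennreal" where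
  "Lqk s b q u k =
     epow (\<integral>\<^sup>+ \<xi>. ennreal ((jb (real_of_int k) powr s * jb (\<xi> + (real_of_int k)\<^sup>2) powr b
                              * cmod (u k \<xi>)) powr q) \<partial>lborel) (1/q)"

definition Xnorm :: "real \<Rightarrow> real \<Rightarrow> real \<Rightarrow> real \<Rightarrow> (int \<Rightarrow> real \<Rightarrow> complex) \<Rightarrow> ennreal" where
  "Xnorm s b p q u = epow (\<integral>\<^sup>+ k. epow (Lqk s b q u k) p \<partial>count_space UNIV) (1/p)"

definition multilinear5 ::
  "((nat \<Rightarrow> int \<Rightarrow> real \<Rightarrow> complex) \<Rightarrow> int \<Rightarrow> real \<Rightarrow> complex) \<Rightarrow> bool" where
  "multilinear5 R \<longleftrightarrow>
     (\<forall>v w. (\<forall>j\<in>{1..5}. v j = w j) \<longrightarrow> R v = R w) \<and>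
     (\<forall>j\<in>{1..5}. \<forall>v (a::complex) f g.
        R (v(j := (\<lambda>k \<xi>. a * f k \<xi> + g k \<xi>))) = (\<lambda>k \<xi>. a * R (v(j := f)) k \<xi> + R (v(j := g)) k \<xi>))"

end

theory Submission
  imports Defs
begin

text \<open>
  The modulation variables are integrated out first. For each input, Hoelder's inequality in
  \<lambda> with the weight <\<lambda>>^(-1/2), which lies in L^r' for r' = 1/(1/2 - \<delta>) > 2, bounds the
  L^1 norm at frequency n by <n>^(-1/2) times the Y0-piece at n. On the output side the decay
  <\<lambda>>^(-1-10\<delta>) beats the weight <\<lambda>>^(1-\<delta>) in L^q0, because 11\<delta> q0 = 11/4 > 1.
  What remains is a convolution over the hyperplanes \<Sum>j \<epsilon>_j k_j = k with the multiplier
  <k>^(1/2) |\<beta>| \<Prod>j <k_j>^(-1/2). Since <k> >= <k_5>/c and <k^+> <= 2^(5/2) \<Prod>j <k_j>, it is dominated by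
  <k_5>^(-1/2) <\<epsilon>_3 k_3 + \<epsilon>_4 k_4>^(-1) \<Prod>j <k_j>^(\<surd>\<delta> - 1/2), whose l^p0' norm on a
  hyperplane is bounded independently of k as soon as 2 \<surd>\<delta> p0 < 1. Hoelder's inequality on
  each hyperplane followed by summation over k gives the l^p0 bound.
\<close>

lemma jb_pos [simp]: "jb x > 0"
  unfolding jb_def by (simp add: add_pos_nonneg)

lemma jb_nonneg [simp]: "jb x \<ge> 0"
  using jb_pos[of x] by linarith

lemma jb_neq_0 [simp]: "jb x \<noteq> 0"
  using jb_pos[of x] by linarith

lemma jb_le_one_plus_abs: "jb x \<le> 1 + \<bar>x\<bar>"
  unfolding jb_def by (rule real_le_lsqrt) (auto simp: power2_eq_square algebra_simps)

lemma one_plus_abs_le_jb: "1 + \<bar>x\<bar> \<le> sqrt 2 * jb x"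
proof -
  have "(1 + \<bar>x\<bar>)\<^sup>2 \<le> 2 * (1 + x\<^sup>2)"
    using sum_squares_bound[of 1 "\<bar>x\<bar>"] by (simp add: power2_eq_square algebra_simps)
  then show ?thesis
    unfolding jb_def by (simp add: real_le_rsqrt real_sqrt_mult[symmetric])
qed

lemma borel_measurable_jb [measurable]: "jb \<in> borel_measurable borel"
  unfolding jb_def by measurable

section \<open>Powers in [0, \<infinity>] and Hoelder's inequality\<close>

lemma epow_ennreal: "x \<ge> 0 \<Longrightarrow> epow (ennreal x) r = ennreal (x powr r)"
  unfolding epow_def by simp

lemma epow_top [simp]: "epow \<top> r = \<top>"
  unfolding epow_def by simp

lemma epow_one_eq_one [simp]: "epow 1 r = 1"
  unfolding epow_def by simp

lemma epow_eq_0_iff [simp]: "epow x r = 0 \<longleftrightarrow> x = 0"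
  by (cases x) (auto simp: epow_ennreal)

lemma epow_eq_top_iff [simp]: "epow x r = \<top> \<longleftrightarrow> x = \<top>"
  by (cases x) (auto simp: epow_ennreal)

lemma epow_one [simp]: "epow x 1 = x"
  by (cases x) (auto simp: epow_ennreal)

lemma epow_mono: "r > 0 \<Longrightarrow> x \<le> y \<Longrightarrow> epow x r \<le> epow y r"
  by (cases x; cases y) (auto simp: epow_ennreal powr_mono2 top_unique)

lemma epow_mult: "r > 0 \<Longrightarrow> epow (x * y) r = epow x r * epow y r"
  by (cases x; cases y)
     (auto simp: epow_ennreal ennreal_mult[symmetric] powr_mult ennreal_mult_top ennreal_top_mult)

lemma epow_epow: "r > 0 \<Longrightarrow> epow (epow x r) s = epow x (r * s)"
  by (cases x) (auto simp: epow_ennreal powr_powr)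

lemma epow_prod: "r > 0 \<Longrightarrow> epow (\<Prod>i\<in>I. f i) r = (\<Prod>i\<in>I. epow (f i) r)"
  by (induction I rule: infinite_finite_induct) (auto simp: epow_mult)

lemma borel_measurable_epow [measurable]: "(\<lambda>x. epow x r) \<in> borel_measurable borel"
  unfolding epow_def by measurable

lemma conjugate_exponent_gt_1:
  fixes p q :: real
  assumes "p > 1" "1/p + 1/q = 1"
  shows "q > 1"
proof -
  have "1/q = 1 - 1/p" using assms(2) by simp
  moreover have "0 < 1/p" "1/p < 1" using assms(1) by simp_all
  ultimately have "0 < 1/q" "1/q < 1" by simp_all
  then show ?thesis by (simp add: divide_less_eq)
qed

lemma ennreal_Young_scaled:
  fixes x y :: ennreal
  assumes p: "p > 1" and pq: "1/p + 1/q = 1" and a: "a > 0" and b: "b > 0"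
  shows "x * y \<le> ennreal (a powr (1/p) * b powr (1/q)) *
           (ennreal (1 / (p * a)) * epow x p + ennreal (1 / (q * b)) * epow y q)"
proof (cases "x = \<top> \<or> y = \<top>")
  case True
  have q: "q > 0" using conjugate_exponent_gt_1[OF p pq] by simp
  show ?thesis
    using True a b p q by (cases "x = 0 \<or> y = 0") (auto simp: ennreal_mult_top ennreal_top_mult)
next
  case False
  then obtain s t where st: "x = ennreal s" "y = ennreal t" "s \<ge> 0" "t \<ge> 0"
    by (cases x; cases y) auto
  have q: "q > 1" using conjugate_exponent_gt_1[OF p pq] .
  define s' where "s' = s / a powr (1/p)"
  define t' where "t' = t / b powr (1/q)"
  have "s' * t' \<le> s' powr p / p + t' powr q / q"
    using st by (intro Youngs_inequality[OF p q pq]) (simp_all add: s'_def t'_def)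
  moreover have "s' powr p = s powr p / a" "t' powr q = t powr q / b"
    using st a b p q unfolding s'_def t'_def by (simp_all add: powr_divide powr_powr)
  ultimately have "s' * t' \<le> 1 / (p * a) * s powr p + 1 / (q * b) * t powr q"
    by (simp add: mult.commute)
  moreover have "s * t = a powr (1/p) * b powr (1/q) * (s' * t')"
    using a b unfolding s'_def t'_def by simp
  ultimately have "s * t \<le> a powr (1/p) * b powr (1/q) * (1 / (p * a) * s powr p + 1 / (q * b) * t powr q)"
    by (simp add: mult_left_mono)
  then show ?thesis
    using st a b p q
    by (simp add: epow_ennreal ennreal_mult[symmetric] ennreal_plus[symmetric] del: ennreal_plus)
qed

lemma nn_integral_Holder:
  fixes f g :: "'a \<Rightarrow> ennreal"
  assumes p: "p > 1" and pq: "1/p + 1/q = 1"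
    and [measurable]: "f \<in> borel_measurable M" "g \<in> borel_measurable M"
  shows "(\<integral>\<^sup>+x. f x * g x \<partial>M) \<le>
     epow (\<integral>\<^sup>+x. epow (f x) p \<partial>M) (1/p) * epow (\<integral>\<^sup>+x. epow (g x) q \<partial>M) (1/q)"
proof -
  define A where "A = (\<integral>\<^sup>+x. epow (f x) p \<partial>M)"
  define B where "B = (\<integral>\<^sup>+x. epow (g x) q \<partial>M)"
  consider "A = 0 \<or> B = 0" | "A \<noteq> 0" "B \<noteq> 0" "A = \<top> \<or> B = \<top>"
    | a b where "A = ennreal a" "B = ennreal b" "a > 0" "b > 0"
    by (cases A; cases B) (auto simp: less_le)
  then show ?thesis
  proof cases
    case 1
    then have "AE x in M. f x * g x = 0"
      unfolding A_def B_def by (subst (asm) (1 2) nn_integral_0_iff_AE) auto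
    then have "(\<integral>\<^sup>+x. f x * g x \<partial>M) = 0"
      by (simp add: nn_integral_0_iff_AE)
    then show ?thesis by simp
  next
    case 2
    then show ?thesis
      unfolding A_def[symmetric] B_def[symmetric] by (auto simp: ennreal_mult_top ennreal_top_mult)
  next
    case 3
    have q: "q > 0" using conjugate_exponent_gt_1[OF p pq] by simp
    let ?c = "a powr (1/p) * b powr (1/q)"
    have "(\<integral>\<^sup>+x. f x * g x \<partial>M) \<le>
        (\<integral>\<^sup>+x. ennreal ?c * (ennreal (1 / (p * a)) * epow (f x) p + ennreal (1 / (q * b)) * epow (g x) q) \<partial>M)"
      by (intro nn_integral_mono ennreal_Young_scaled p pq 3)
    also have "\<dots> = ennreal ?c * (ennreal (1 / (p * a)) * A + ennreal (1 / (q * b)) * B)"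
      unfolding A_def B_def by (simp add: nn_integral_cmult nn_integral_add)
    also have "\<dots> = ennreal ?c"
      using 3 p q pq by (simp add: ennreal_mult[symmetric] ennreal_plus[symmetric] del: ennreal_plus)
    also have "\<dots> = epow A (1/p) * epow B (1/q)"
      using 3 by (simp add: epow_ennreal ennreal_mult)
    finally show ?thesis unfolding A_def B_def .
  qed
qed

definition lp_norm :: "real \<Rightarrow> ('a \<Rightarrow> ennreal) \<Rightarrow> ennreal" where
  "lp_norm p f = epow (\<integral>\<^sup>+k. epow (f k) p \<partial>count_space UNIV) (1/p)"

lemma Xnorm_eq_lp_norm: "Xnorm s b p q u = lp_norm p (Lqk s b q u)"
  unfolding Xnorm_def lp_norm_def ..

lemma lp_norm_le_cmult:
  assumes "p > 0" "\<And>k. f k \<le> c * g k"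
  shows "lp_norm p f \<le> c * lp_norm p g"
proof -
  have "lp_norm p f \<le> epow (\<integral>\<^sup>+k. epow (c * g k) p \<partial>count_space UNIV) (1/p)"
    unfolding lp_norm_def using assms by (intro epow_mono nn_integral_mono) auto
  also have "\<dots> = c * lp_norm p g"
    using assms(1) by (simp add: lp_norm_def epow_mult nn_integral_cmult epow_epow)
  finally show ?thesis .
qed

section \<open>Summation over the fibres of a map on finitely supported vectors\<close>

lemma nn_integral_count_space_Times:
  "(\<integral>\<^sup>+z. f z \<partial>count_space (A \<times> B)) = (\<integral>\<^sup>+x. \<integral>\<^sup>+y. f (x, y) \<partial>count_space B \<partial>count_space A)"
proof -
  have "(\<integral>\<^sup>+z. f z \<partial>count_space (A \<times> B)) = (\<integral>\<^sup>+z. f z * indicator (A \<times> B) z \<partial>count_space UNIV)"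
    by (simp add: nn_integral_count_space_indicator)
  also have "\<dots> = (\<integral>\<^sup>+x. \<integral>\<^sup>+y. f (x, y) * indicator (A \<times> B) (x, y) \<partial>count_space UNIV \<partial>count_space UNIV)"
    by (rule nn_integral_fst_count_space[symmetric])
  also have "\<dots> = (\<integral>\<^sup>+x. \<integral>\<^sup>+y. f (x, y) \<partial>count_space B \<partial>count_space A)"
    by (auto simp: nn_integral_count_space_indicator indicator_def intro!: nn_integral_cong)
  finally show ?thesis .
qed

lemma nn_integral_count_space_tensor:
  "(\<integral>\<^sup>+z. f (fst z) * g (snd z) \<partial>count_space UNIV) =
     (\<integral>\<^sup>+x. f x \<partial>count_space UNIV) * (\<integral>\<^sup>+y. g y \<partial>count_space UNIV)"
proof -
  have "(\<integral>\<^sup>+z. f (fst z) * g (snd z) \<partial>count_space UNIV) =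
      (\<integral>\<^sup>+x. \<integral>\<^sup>+y. f x * g y \<partial>count_space UNIV \<partial>count_space UNIV)"
    using nn_integral_count_space_Times[of UNIV UNIV "\<lambda>z. f (fst z) * g (snd z)"] by simp
  then show ?thesis by (simp add: nn_integral_cmult nn_integral_multc)
qed

lemma nn_integral_count_space_inj_on_le:
  assumes "inj_on F A"
  shows "(\<integral>\<^sup>+x. g (F x) \<partial>count_space A) \<le> (\<integral>\<^sup>+y. g y \<partial>count_space UNIV)"
proof -
  have "(\<integral>\<^sup>+x. g (F x) \<partial>count_space A) = (\<integral>\<^sup>+y. g y \<partial>count_space (F ` A))"
    using assms by (intro nn_integral_bij_count_space) (simp add: bij_betw_def)
  also have "\<dots> \<le> (\<integral>\<^sup>+y. g y \<partial>count_space UNIV)"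
    by (subst nn_integral_count_space_indicator) (auto intro!: nn_integral_mono simp: indicator_def)
  finally show ?thesis .
qed

lemma nn_integral_count_space_fibres:
  fixes s :: "'a \<Rightarrow> 'b::countable"
  shows "(\<integral>\<^sup>+k. (\<integral>\<^sup>+x. G x \<partial>count_space {x \<in> S. s x = k}) \<partial>count_space UNIV) = (\<integral>\<^sup>+x. G x \<partial>count_space S)"
proof -
  have "(\<integral>\<^sup>+x. G x \<partial>count_space {x \<in> S. s x = k}) = (\<integral>\<^sup>+x. G x * indicator {s x} k \<partial>count_space S)" for k
    by (subst (1 2) nn_integral_count_space_indicator) (auto intro!: nn_integral_cong simp: indicator_def)
  then have "(\<integral>\<^sup>+k. (\<integral>\<^sup>+x. G x \<partial>count_space {x \<in> S. s x = k}) \<partial>count_space UNIV) =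
      (\<integral>\<^sup>+k. (\<integral>\<^sup>+x. G x * indicator {s x} k \<partial>count_space S) \<partial>count_space UNIV)"
    by simp
  also have "\<dots> = (\<integral>\<^sup>+x. (\<integral>\<^sup>+k. G x * indicator {s x} k \<partial>count_space UNIV) \<partial>count_space S)"
    by (rule nn_integral_count_space_nn_integral[symmetric]) auto
  also have "\<dots> = (\<integral>\<^sup>+x. G x \<partial>count_space S)"
    by (simp add: nn_integral_cmult_indicator)
  finally show ?thesis .
qed

definition supported_on :: "'a set \<Rightarrow> ('a \<Rightarrow> 'b::zero) set" where
  "supported_on J = {K. \<forall>j. j \<notin> J \<longrightarrow> K j = 0}"

lemma bij_betw_supported_on_insert:
  assumes "i \<notin> J"
  shows "bij_betw (\<lambda>(n, K). K(i := n)) (UNIV \<times> supported_on J) (supported_on (insert i J))"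
proof -
  have "K \<in> (\<lambda>(n, K). K(i := n)) ` (UNIV \<times> supported_on J)" if "K \<in> supported_on (insert i J)" for K
    using that by (intro image_eqI[where x = "(K i, K(i := 0))"]) (auto simp: supported_on_def)
  then show ?thesis
    using assms by (auto simp: bij_betw_def inj_on_def supported_on_def fun_eq_iff)
qed

lemma nn_integral_supported_on_prod:
  fixes h :: "'a \<Rightarrow> 'b::zero \<Rightarrow> ennreal"
  assumes "finite J"
  shows "(\<integral>\<^sup>+K. (\<Prod>j\<in>J. h j (K j)) \<partial>count_space (supported_on J)) = (\<Prod>j\<in>J. \<integral>\<^sup>+n. h j n \<partial>count_space UNIV)"
  using assms
proof (induction J rule: finite_induct)
  case empty
  have "supported_on {} = {\<lambda>_::'a. 0::'b}" by (auto simp: supported_on_def)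
  then show ?case by simp
next
  case (insert i J)
  have "(\<integral>\<^sup>+K. (\<Prod>j\<in>insert i J. h j (K j)) \<partial>count_space (supported_on (insert i J))) =
      (\<integral>\<^sup>+z. (\<Prod>j\<in>insert i J. h j ((case z of (n, K) \<Rightarrow> K(i := n)) j)) \<partial>count_space (UNIV \<times> supported_on J))"
    by (rule nn_integral_bij_count_space[OF bij_betw_supported_on_insert[OF insert(2)], symmetric])
  also have "\<dots> = (\<integral>\<^sup>+n. \<integral>\<^sup>+K. h i n * (\<Prod>j\<in>J. h j (K j)) \<partial>count_space (supported_on J) \<partial>count_space UNIV)"
  proof -
    have "(\<Prod>j\<in>J. h j ((K(i := n)) j)) = (\<Prod>j\<in>J. h j (K j))" for K n
      using insert(2) by (intro prod.cong) auto
    then show ?thesis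
      unfolding nn_integral_count_space_Times using insert(1,2) by (simp del: fun_upd_apply) simp
  qed
  also have "\<dots> = (\<integral>\<^sup>+n. h i n \<partial>count_space UNIV) * (\<Prod>j\<in>J. \<integral>\<^sup>+n. h j n \<partial>count_space UNIV)"
    by (simp add: nn_integral_cmult nn_integral_multc insert(3))
  finally show ?case using insert(1,2) by simp
qed

lemma lp_norm_fibre_convolution_le:
  fixes s :: "('a \<Rightarrow> 'c::zero) \<Rightarrow> 'b::countable" and b :: "'a \<Rightarrow> 'c \<Rightarrow> ennreal"
  assumes J: "finite J" and p: "p > 1" and pq: "1/p + 1/q = 1"
    and W: "\<And>k. (\<integral>\<^sup>+K. epow (W k K) q \<partial>count_space {K \<in> supported_on J. s K = k}) \<le> M"
  shows "lp_norm p (\<lambda>k. \<integral>\<^sup>+K. W k K * (\<Prod>j\<in>J. b j (K j)) \<partial>count_space {K \<in> supported_on J. s K = k})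
           \<le> epow M (1/q) * (\<Prod>j\<in>J. lp_norm p (b j))"
proof -
  have q: "q > 0" using conjugate_exponent_gt_1[OF p pq] by simp
  define G where "G k = (\<integral>\<^sup>+K. (\<Prod>j\<in>J. epow (b j (K j)) p) \<partial>count_space {K \<in> supported_on J. s K = k})" for k
  have "(\<integral>\<^sup>+K. W k K * (\<Prod>j\<in>J. b j (K j)) \<partial>count_space {K \<in> supported_on J. s K = k})
      \<le> epow M (1/q) * epow (G k) (1/p)" for k
  proof -
    have "(\<integral>\<^sup>+K. W k K * (\<Prod>j\<in>J. b j (K j)) \<partial>count_space {K \<in> supported_on J. s K = k})
        \<le> epow (G k) (1/p) * epow (\<integral>\<^sup>+K. epow (W k K) q \<partial>count_space {K \<in> supported_on J. s K = k}) (1/q)"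
      using nn_integral_Holder[OF p pq, of "\<lambda>K. \<Prod>j\<in>J. b j (K j)" _ "W k"] p
      by (simp add: G_def epow_prod mult.commute)
    also have "\<dots> \<le> epow (G k) (1/p) * epow M (1/q)"
      using q W by (intro mult_left_mono epow_mono) auto
    finally show ?thesis by (simp add: mult.commute)
  qed
  then have "lp_norm p (\<lambda>k. \<integral>\<^sup>+K. W k K * (\<Prod>j\<in>J. b j (K j)) \<partial>count_space {K \<in> supported_on J. s K = k})
      \<le> epow M (1/q) * lp_norm p (\<lambda>k. epow (G k) (1/p))"
    using p by (intro lp_norm_le_cmult) auto
  also have "lp_norm p (\<lambda>k. epow (G k) (1/p)) = epow (\<integral>\<^sup>+k. G k \<partial>count_space UNIV) (1/p)"
    using p by (simp add: lp_norm_def epow_epow)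
  also have "(\<integral>\<^sup>+k. G k \<partial>count_space UNIV) = (\<Prod>j\<in>J. \<integral>\<^sup>+n. epow (b j n) p \<partial>count_space UNIV)"
    unfolding G_def nn_integral_count_space_fibres by (rule nn_integral_supported_on_prod[OF J])
  also have "epow \<dots> (1/p) = (\<Prod>j\<in>J. lp_norm p (b j))"
    using p by (simp add: lp_norm_def epow_prod)
  finally show ?thesis .
qed

section \<open>Integrability of negative powers of the Japanese bracket\<close>

lemma nn_integral_lborel_translate:
  fixes f :: "real \<Rightarrow> ennreal"
  assumes "f \<in> borel_measurable borel"
  shows "(\<integral>\<^sup>+x. f (x + c) \<partial>lborel) = (\<integral>\<^sup>+x. f x \<partial>lborel)"
  using nn_integral_real_affine[of f 1 c] assms by (simp add: add.commute)

lemma nn_integral_lborel_floor: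
  fixes f :: "int \<Rightarrow> ennreal"
  shows "(\<integral>\<^sup>+x. f \<lfloor>x::real\<rfloor> \<partial>lborel) = (\<integral>\<^sup>+n. f n \<partial>count_space UNIV)"
proof -
  have "f \<lfloor>x\<rfloor> = (\<integral>\<^sup>+n. f n * indicator {real_of_int n..<real_of_int n + 1} x \<partial>count_space UNIV)" for x :: real
  proof -
    have "(\<integral>\<^sup>+n. f n * indicator {real_of_int n..<real_of_int n + 1} x \<partial>count_space UNIV) =
        (\<Sum>n\<in>{\<lfloor>x\<rfloor>}. f n * indicator {real_of_int n..<real_of_int n + 1} x)"
      by (rule nn_integral_count_space') (auto simp: indicator_def floor_unique)
    then show ?thesis by (simp add: indicator_def)
  qed
  then have "(\<integral>\<^sup>+x. f \<lfloor>x::real\<rfloor> \<partial>lborel) =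
      (\<integral>\<^sup>+x. \<integral>\<^sup>+n. f n * indicator {real_of_int n..<real_of_int n + 1} x \<partial>count_space UNIV \<partial>lborel)"
    by simp
  also have "\<dots> = (\<integral>\<^sup>+n. \<integral>\<^sup>+x. f n * indicator {real_of_int n..<real_of_int n + 1} x \<partial>lborel \<partial>count_space UNIV)"
    by (rule nn_integral_count_space_nn_integral) auto
  also have "\<dots> = (\<integral>\<^sup>+n. f n \<partial>count_space UNIV)"
    by (simp add: nn_integral_cmult_indicator)
  finally show ?thesis .
qed

definition jb_series :: "real \<Rightarrow> ennreal" where
  "jb_series s = (\<integral>\<^sup>+n. ennreal (jb (real_of_int n) powr (- s)) \<partial>count_space UNIV)"

definition jb_integral :: "real \<Rightarrow> ennreal" where
  "jb_integral s = (\<integral>\<^sup>+x. ennreal (jb x powr (- s)) \<partial>lborel)"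

lemma powr_neg_le_scaled:
  fixes x y c s :: real
  assumes "0 < y" "y \<le> c * x" "c > 0" "s \<ge> 0"
  shows "x powr (- s) \<le> c powr s * y powr (- s)"
proof -
  have "c * x > 0" using assms by linarith
  then have "x > 0" using \<open>c > 0\<close> by (simp add: zero_less_mult_iff)
  have "(c * x) powr (- s) \<le> y powr (- s)"
    using assms by (intro powr_mono2') auto
  moreover have "x powr (- s) = c powr s * (c * x) powr (- s)"
    using \<open>c > 0\<close> \<open>x > 0\<close> by (simp add: powr_mult powr_minus)
  ultimately show ?thesis by (simp add: mult_left_mono)
qed

lemma jb_powr_neg_le_one_plus_abs: "s \<ge> 0 \<Longrightarrow> jb x powr (- s) \<le> sqrt 2 powr s * (1 + \<bar>x\<bar>) powr (- s)"
  using one_plus_abs_le_jb[of x] by (intro powr_neg_le_scaled) auto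

lemma jb_powr_neg_le_floor:
  assumes "s \<ge> 0"
  shows "jb x powr (- s) \<le> (2 * sqrt 2) powr s * jb \<lfloor>x\<rfloor> powr (- s)"
proof (rule powr_neg_le_scaled)
  have "jb \<lfloor>x\<rfloor> \<le> 1 + \<bar>real_of_int \<lfloor>x\<rfloor>\<bar>" by (rule jb_le_one_plus_abs)
  also have "\<dots> \<le> 2 * (1 + \<bar>x\<bar>)"
    using of_int_floor_le[of x] real_of_int_floor_gt_diff_one[of x] by (simp add: abs_if) linarith
  also have "\<dots> \<le> 2 * sqrt 2 * jb x" using one_plus_abs_le_jb[of x] by simp
  finally show "jb \<lfloor>x\<rfloor> \<le> 2 * sqrt 2 * jb x" .
qed (use assms in auto)

lemma inj_nat_abs_sign: "inj (\<lambda>n::int. (nat \<bar>n\<bar>, n < 0))"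
proof (rule injI)
  fix m n :: int
  assume "(nat \<bar>m\<bar>, m < 0) = (nat \<bar>n\<bar>, n < 0)"
  then have "nat \<bar>m\<bar> = nat \<bar>n\<bar>" "m < 0 \<longleftrightarrow> n < 0" by simp_all
  then show "m = n" by (auto simp: eq_nat_nat_iff abs_eq_iff)
qed

lemma jb_series_finite:
  assumes "s > 1"
  shows "jb_series s < \<top>"
proof -
  define h where "h m = ennreal (sqrt 2 powr s * real (Suc m) powr (- s))" for m :: nat
  have "jb_series s \<le> (\<integral>\<^sup>+n. h (nat \<bar>n\<bar>) \<partial>count_space (UNIV :: int set))"
    unfolding jb_series_def h_def using jb_powr_neg_le_one_plus_abs assms
    by (intro nn_integral_mono ennreal_leI) (simp add: add.commute)
  also have "\<dots> \<le> (\<integral>\<^sup>+z. h (fst z) \<partial>count_space (UNIV :: (nat \<times> bool) set))"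
    using nn_integral_count_space_inj_on_le[OF inj_nat_abs_sign, of "\<lambda>z. h (fst z)"] by simp
  also have "\<dots> = (\<Sum>m. h m) * 2"
    using nn_integral_count_space_tensor[of h "\<lambda>_::bool. 1"]
    by (simp add: nn_integral_count_space_nat)
  also have "\<dots> < \<top>"
  proof -
    have "summable (\<lambda>m. real (Suc m) powr (- s))"
      using assms summable_Suc_iff[of "\<lambda>m. real m powr (- s)"] by (simp add: summable_real_powr_iff)
    then have "(\<Sum>m. h m) \<noteq> \<top>"
      unfolding h_def by (intro ennreal_suminf_neq_top summable_mult) auto
    then show ?thesis by (simp add: ennreal_mult_less_top less_top)
  qed
  finally show ?thesis .
qed

lemma jb_integral_finite:
  assumes "s > 1"
  shows "jb_integral s < \<top>"
proof -
  have "jb_integral s \<le> (\<integral>\<^sup>+x. ennreal ((2 * sqrt 2) powr s) * ennreal (jb \<lfloor>x::real\<rfloor> powr (- s)) \<partial>lborel)"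
    unfolding jb_integral_def using jb_powr_neg_le_floor[of s] assms
    by (intro nn_integral_mono) (simp add: ennreal_mult[symmetric] ennreal_leI)
  also have "\<dots> = ennreal ((2 * sqrt 2) powr s) * jb_series s"
    using nn_integral_lborel_floor[of "\<lambda>n. ennreal ((2 * sqrt 2) powr s) * ennreal (jb n powr - s)"]
    by (simp add: jb_series_def nn_integral_cmult)
  also have "\<dots> < \<top>"
    using jb_series_finite[OF assms] by (simp add: ennreal_mult_less_top)
  finally show ?thesis .
qed

section \<open>The multiplier on a hyperplane of frequencies\<close>

definition hyperplane :: "(nat \<Rightarrow> int) \<Rightarrow> int \<Rightarrow> (nat \<Rightarrow> int) set" where
  "hyperplane \<epsilon> k = {K \<in> supported_on {1..5}. (\<Sum>j\<in>{1..5}. \<epsilon> j * K j) = k}"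

lemma sum_atLeastAtMost_1_5: "(\<Sum>j\<in>{1..5::nat}. f j) = f 1 + f 2 + f 3 + f 4 + f 5"
  by (simp add: numeral_eq_Suc add.assoc)

lemma prod_atLeastAtMost_1_5: "(\<Prod>j\<in>{1..5::nat}. f j) = f 1 * f 2 * f 3 * f 4 * f 5"
  by (simp add: numeral_eq_Suc mult.assoc)

lemma inj_on_hyperplane:
  assumes i: "i \<in> {1,2}" and l: "l \<in> {3,4}" and \<epsilon>: "\<forall>j\<in>{1..4}. \<epsilon> j \<noteq> 0"
  shows "inj_on (\<lambda>K. (K i, K l, \<epsilon> 3 * K 3 + \<epsilon> 4 * K 4, K 5)) (hyperplane \<epsilon> k)"
proof (rule inj_onI)
  fix K K' assume K: "K \<in> hyperplane \<epsilon> k" and K': "K' \<in> hyperplane \<epsilon> k"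
    and eq: "(K i, K l, \<epsilon> 3 * K 3 + \<epsilon> 4 * K 4, K 5) = (K' i, K' l, \<epsilon> 3 * K' 3 + \<epsilon> 4 * K' 4, K' 5)"
  have \<epsilon>': "\<epsilon> 1 \<noteq> 0" "\<epsilon> 2 \<noteq> 0" "\<epsilon> 3 \<noteq> 0" "\<epsilon> 4 \<noteq> 0" using \<epsilon> by auto
  have 34: "K 3 = K' 3" "K 4 = K' 4" using l eq \<epsilon>' by auto
  have "\<epsilon> 1 * K 1 + \<epsilon> 2 * K 2 = \<epsilon> 1 * K' 1 + \<epsilon> 2 * K' 2"
    using K K' eq 34 unfolding hyperplane_def sum_atLeastAtMost_1_5 by simp
  then have 12: "K 1 = K' 1" "K 2 = K' 2" using i eq \<epsilon>' by auto
  show "K = K'"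
  proof
    fix j
    show "K j = K' j"
    proof (cases "j \<in> {1..5}")
      case True
      then have "j \<in> {1, 2, 3, 4, 5}" by auto
      then show ?thesis using 12 34 eq by auto
    next
      case False
      then show ?thesis using K K' by (simp add: hyperplane_def supported_on_def)
    qed
  qed
qed

lemma nn_integral_hyperplane_le_prod:
  fixes f1 f2 f3 f4 :: "int \<Rightarrow> ennreal"
  assumes "i \<in> {1,2}" "l \<in> {3,4}" "\<forall>j\<in>{1..4}. \<epsilon> j \<noteq> 0"
  shows "(\<integral>\<^sup>+K. f1 (K i) * f2 (K l) * f3 (\<epsilon> 3 * K 3 + \<epsilon> 4 * K 4) * f4 (K 5) \<partial>count_space (hyperplane \<epsilon> k))
    \<le> (\<integral>\<^sup>+n. f1 n \<partial>count_space UNIV) * (\<integral>\<^sup>+n. f2 n \<partial>count_space UNIV) *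
       (\<integral>\<^sup>+n. f3 n \<partial>count_space UNIV) * (\<integral>\<^sup>+n. f4 n \<partial>count_space UNIV)"
proof -
  define F where "F z = f1 (fst z) * (f2 (fst (snd z)) * (f3 (fst (snd (snd z))) * f4 (snd (snd (snd z)))))"
    for z :: "int \<times> int \<times> int \<times> int"
  have "(\<integral>\<^sup>+K. f1 (K i) * f2 (K l) * f3 (\<epsilon> 3 * K 3 + \<epsilon> 4 * K 4) * f4 (K 5) \<partial>count_space (hyperplane \<epsilon> k))
      = (\<integral>\<^sup>+K. F (K i, K l, \<epsilon> 3 * K 3 + \<epsilon> 4 * K 4, K 5) \<partial>count_space (hyperplane \<epsilon> k))"
    by (simp add: F_def mult.assoc)
  also have "\<dots> \<le> (\<integral>\<^sup>+z. F z \<partial>count_space UNIV)"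
    by (rule nn_integral_count_space_inj_on_le[OF inj_on_hyperplane[OF assms]])
  also have "\<dots> = (\<integral>\<^sup>+n. f1 n \<partial>count_space UNIV) * (\<integral>\<^sup>+n. f2 n \<partial>count_space UNIV) *
       (\<integral>\<^sup>+n. f3 n \<partial>count_space UNIV) * (\<integral>\<^sup>+n. f4 n \<partial>count_space UNIV)"
    using nn_integral_count_space_tensor[of f1 "\<lambda>w. f2 (fst w) * (f3 (fst (snd w)) * f4 (snd (snd w)))"]
      nn_integral_count_space_tensor[of f2 "\<lambda>w. f3 (fst w) * f4 (snd w)"]
      nn_integral_count_space_tensor[of f3 f4]
    by (simp add: F_def mult.assoc)
  finally show ?thesis .
qed

definition majorant :: "real \<Rightarrow> (nat \<Rightarrow> int) \<Rightarrow> (nat \<Rightarrow> int) \<Rightarrow> real" where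
  "majorant \<sigma> \<epsilon> K = jb (K 5) powr (-1/2) * jb (\<epsilon> 3 * K 3 + \<epsilon> 4 * K 4) powr (-1) *
     (\<Prod>j\<in>{1..5}. jb (K j) powr (\<sigma> - 1/2))"

definition majorant_bound :: "real \<Rightarrow> real \<Rightarrow> ennreal" where
  "majorant_bound \<sigma> q =
     4 * (jb_series ((1 - 2 * \<sigma>) * q) * jb_series ((1 - 2 * \<sigma>) * q) * jb_series q * jb_series ((1 - \<sigma>) * q))"

lemma majorant_bound_finite:
  assumes "0 \<le> \<sigma>" "q > 0" "(1 - 2 * \<sigma>) * q > 1"
  shows "majorant_bound \<sigma> q \<noteq> \<top>"
proof -
  have "(1 - 2 * \<sigma>) * q \<le> (1 - \<sigma>) * q" "(1 - 2 * \<sigma>) * q \<le> q"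
    using assms by (simp_all add: algebra_simps)
  then have "(1 - \<sigma>) * q > 1" "q > 1" using assms(3) by linarith+
  then have "jb_series ((1 - 2 * \<sigma>) * q) < \<top>" "jb_series q < \<top>" "jb_series ((1 - \<sigma>) * q) < \<top>"
    using assms(3) by (simp_all add: jb_series_finite)
  then show ?thesis unfolding majorant_bound_def by (simp add: ennreal_mult_eq_top_iff less_top)
qed

lemma majorant_nonneg: "majorant \<sigma> \<epsilon> K \<ge> 0"
  unfolding majorant_def by (simp add: prod_nonneg)

(* ab \<le> a\<^sup>2 + b\<^sup>2 separates k_1 from k_2 and k_3 from k_4: each of the four terms only involves
   coordinates that parametrize the hyperplane (see inj_on_hyperplane). *)
lemma majorant_powr_le:
  "majorant \<sigma> \<epsilon> K powr q \<le> (\<Sum>i\<in>{1,2}. \<Sum>l\<in>{3,4}.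
      jb (K i) powr (- ((1 - 2 * \<sigma>) * q)) * jb (K l) powr (- ((1 - 2 * \<sigma>) * q)) *
      jb (\<epsilon> 3 * K 3 + \<epsilon> 4 * K 4) powr (- q) * jb (K 5) powr (- ((1 - \<sigma>) * q)))"
proof -
  define a where "a j = jb (K j) powr ((\<sigma> - 1/2) * q)" for j
  define w where "w = jb (\<epsilon> 3 * K 3 + \<epsilon> 4 * K 4) powr (- q) * jb (K 5) powr (- ((1 - \<sigma>) * q))"
  have a_sq: "a j * a j = jb (K j) powr (- ((1 - 2 * \<sigma>) * q))" for j
    unfolding a_def by (simp add: powr_add[symmetric] algebra_simps)
  have a_le: "a j * a j' \<le> a j * a j + a j' * a j'" for j j'
  proof -
    have "0 \<le> a j * a j'" by (simp add: a_def)
    then show ?thesis using sum_squares_bound[of "a j" "a j'"] by (simp add: power2_eq_square)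
  qed
  have a5: "jb (K 5) powr (-1/2 * q) * a 5 = jb (K 5) powr (- ((1 - \<sigma>) * q))"
    unfolding a_def by (simp add: powr_add[symmetric] algebra_simps)
  have "majorant \<sigma> \<epsilon> K powr q = (jb (K 5) powr (-1/2) * jb (\<epsilon> 3 * K 3 + \<epsilon> 4 * K 4) powr (-1)) powr q *
      (\<Prod>j\<in>{1..5}. jb (K j) powr (\<sigma> - 1/2)) powr q"
    unfolding majorant_def by (rule powr_mult)
  also have "\<dots> = (jb (K 5) powr (-1/2)) powr q * (jb (\<epsilon> 3 * K 3 + \<epsilon> 4 * K 4) powr (-1)) powr q *
      (\<Prod>j\<in>{1..5}. jb (K j) powr (\<sigma> - 1/2)) powr q"
    by (simp only: powr_mult)
  also have "\<dots> = (jb (K 5) powr (-1/2 * q) * a 5) * jb (\<epsilon> 3 * K 3 + \<epsilon> 4 * K 4) powr (- q) *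
      ((a 1 * a 2) * (a 3 * a 4))"
    unfolding a_def prod_atLeastAtMost_1_5 powr_mult powr_powr mult_minus1 by (simp only: mult_ac)
  also have "\<dots> = w * ((a 1 * a 2) * (a 3 * a 4))"
    unfolding w_def a5[symmetric] by (simp only: mult_ac)
  also have "\<dots> \<le> w * ((a 1 * a 1 + a 2 * a 2) * (a 3 * a 3 + a 4 * a 4))"
    by (intro mult_left_mono mult_mono a_le) (simp_all add: a_def w_def add_nonneg_nonneg)
  also have "\<dots> = (\<Sum>i\<in>{1,2}. \<Sum>l\<in>{3,4}. a i * a i * (a l * a l) * w)"
    by (simp add: algebra_simps)
  finally show ?thesis by (simp add: a_sq w_def mult.assoc)
qed

lemma nn_integral_majorant_powr_le:
  assumes "\<forall>j\<in>{1..4}. \<epsilon> j \<noteq> 0"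
  shows "(\<integral>\<^sup>+K. ennreal (majorant \<sigma> \<epsilon> K powr q) \<partial>count_space (hyperplane \<epsilon> k))
    \<le> majorant_bound \<sigma> q"
proof -
  let ?\<phi> = "\<lambda>n. ennreal (jb (real_of_int n) powr (- ((1 - 2 * \<sigma>) * q)))"
  let ?\<psi> = "\<lambda>n. ennreal (jb (real_of_int n) powr (- q))"
  let ?w = "\<lambda>n. ennreal (jb (real_of_int n) powr (- ((1 - \<sigma>) * q)))"
  have "(\<integral>\<^sup>+K. ennreal (majorant \<sigma> \<epsilon> K powr q) \<partial>count_space (hyperplane \<epsilon> k))
      \<le> (\<integral>\<^sup>+K. (\<Sum>i\<in>{1,2}. \<Sum>l\<in>{3,4}. ?\<phi> (K i) * ?\<phi> (K l) * ?\<psi> (\<epsilon> 3 * K 3 + \<epsilon> 4 * K 4) * ?w (K 5))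
          \<partial>count_space (hyperplane \<epsilon> k))"
    by (intro nn_integral_mono order_trans[OF ennreal_leI[OF majorant_powr_le]]) (simp add: ennreal_mult)
  also have "\<dots> = (\<Sum>i\<in>{1,2}. \<Sum>l\<in>{3,4}. \<integral>\<^sup>+K. ?\<phi> (K i) * ?\<phi> (K l) * ?\<psi> (\<epsilon> 3 * K 3 + \<epsilon> 4 * K 4) * ?w (K 5)
          \<partial>count_space (hyperplane \<epsilon> k))"
    by (simp add: nn_integral_sum del: sum.insert)
  also have "\<dots> \<le> (\<Sum>i\<in>{1,2::nat}. \<Sum>l\<in>{3,4::nat}.
      jb_series ((1 - 2 * \<sigma>) * q) * jb_series ((1 - 2 * \<sigma>) * q) * jb_series q * jb_series ((1 - \<sigma>) * q))"
    unfolding jb_series_def using assms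
    by (intro sum_mono nn_integral_hyperplane_le_prod) auto
  also have "\<dots> = majorant_bound \<sigma> q"
    by (simp add: majorant_bound_def)
  finally show ?thesis .
qed

lemma one_plus_sum_le_prod:
  fixes f :: "'a \<Rightarrow> real"
  assumes "\<And>i. i \<in> I \<Longrightarrow> f i \<ge> 0"
  shows "1 + sum f I \<le> (\<Prod>i\<in>I. 1 + f i)"
  using assms
proof (induction I rule: infinite_finite_induct)
  case (insert i I)
  have "1 + sum f (insert i I) \<le> (1 + f i) * (1 + sum f I)"
    using insert by (simp add: algebra_simps sum_nonneg)
  also have "\<dots> \<le> (1 + f i) * (\<Prod>i\<in>I. 1 + f i)"
    using insert by (intro mult_left_mono) auto
  finally show ?case using insert by simp
qed auto

lemma jb_Max_le_prod:
  assumes K: "K \<in> hyperplane \<epsilon> k" and \<epsilon>: "\<forall>j\<in>{1..5}. \<bar>\<epsilon> j\<bar> \<le> 1"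
  shows "jb (real_of_int (Max ({\<bar>k\<bar>} \<union> (\<lambda>j. \<bar>K j\<bar>) ` {1..5}))) \<le> sqrt 2 ^ 5 * (\<Prod>j\<in>{1..5}. jb (K j))"
proof -
  let ?X = "{\<bar>k\<bar>} \<union> (\<lambda>j. \<bar>K j\<bar>) ` {1..5}"
  let ?S = "\<Sum>j\<in>{1..5}. \<bar>K j\<bar>"
  have "\<bar>k\<bar> \<le> (\<Sum>j\<in>{1..5}. \<bar>\<epsilon> j * K j\<bar>)"
    using K unfolding hyperplane_def by (auto intro: sum_abs)
  also have "\<dots> \<le> ?S"
    using \<epsilon> by (intro sum_mono) (simp add: abs_mult mult_left_le_one_le)
  finally have "Max ?X \<le> ?S"
    by (intro Max.boundedI) (auto intro: member_le_sum)
  moreover have "0 \<le> Max ?X"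
    by (rule order.trans[OF abs_ge_zero[of k]]) (rule Max_ge, auto)
  ultimately have "\<bar>real_of_int (Max ?X)\<bar> \<le> real_of_int ?S"
    by (metis abs_of_nonneg of_int_abs of_int_le_iff)
  then have "jb (real_of_int (Max ?X)) \<le> 1 + (\<Sum>j\<in>{1..5}. \<bar>real_of_int (K j)\<bar>)"
    using jb_le_one_plus_abs[of "real_of_int (Max ?X)"] by simp
  also have "\<dots> \<le> (\<Prod>j\<in>{1..5}. 1 + \<bar>real_of_int (K j)\<bar>)"
    using one_plus_sum_le_prod[of "{1..5}" "\<lambda>j. \<bar>real_of_int (K j)\<bar>"] by simp
  also have "\<dots> \<le> (\<Prod>j\<in>{1..5::nat}. sqrt 2 * jb (K j))"
    by (intro prod_mono) (auto intro: one_plus_abs_le_jb)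
  finally show ?thesis by (simp add: prod.distrib)
qed

definition multiplier :: "(int \<Rightarrow> (nat \<Rightarrow> int) \<Rightarrow> real) \<Rightarrow> int \<Rightarrow> (nat \<Rightarrow> int) \<Rightarrow> real" where
  "multiplier \<beta> k K = jb k powr (1/2) * \<bar>\<beta> k K\<bar> * (\<Prod>j\<in>{1..5}. jb (K j) powr (-1/2))"

lemma multiplier_nonneg: "multiplier \<beta> k K \<ge> 0"
  unfolding multiplier_def by (simp add: prod_nonneg)

lemma multiplier_le_majorant:
  assumes K: "K \<in> hyperplane \<epsilon> k" and \<epsilon>: "\<forall>j\<in>{1..5}. \<bar>\<epsilon> j\<bar> \<le> 1"
    and c: "c > 0" and A: "A \<ge> 0" and \<sigma>: "\<sigma> \<ge> 0"
    and supp: "\<beta> k K \<noteq> 0 \<Longrightarrow> jb (K 5) \<le> c * jb k"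
    and bound: "\<bar>\<beta> k K\<bar> \<le> A * jb (real_of_int (Max ({\<bar>k\<bar>} \<union> (\<lambda>j. \<bar>K j\<bar>) ` {1..5}))) powr \<sigma>
                   / (jb k * jb (\<epsilon> 3 * K 3 + \<epsilon> 4 * K 4))"
  shows "multiplier \<beta> k K \<le> A * sqrt c * (sqrt 2 ^ 5) powr \<sigma> * majorant \<sigma> \<epsilon> K"
proof (cases "\<beta> k K = 0")
  case True
  then show ?thesis using majorant_nonneg[of \<sigma> \<epsilon> K] A c by (simp add: multiplier_def)
next
  case False
  let ?M = "jb (real_of_int (Max ({\<bar>k\<bar>} \<union> (\<lambda>j. \<bar>K j\<bar>) ` {1..5})))"
  let ?m = "jb (\<epsilon> 3 * K 3 + \<epsilon> 4 * K 4)"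
  let ?Q = "?m powr (-1) * (\<Prod>j\<in>{1..5}. jb (K j) powr (-1/2))"
  have Q: "?Q \<ge> 0" by (simp add: prod_nonneg)
  have k: "jb k powr (-1/2) \<le> sqrt c * jb (K 5) powr (-1/2)"
    using powr_neg_le_scaled[of "jb (K 5)" c "jb k" "1/2"] supp[OF False] c
    by (simp add: powr_half_sqrt)
  have M: "?M powr \<sigma> \<le> (sqrt 2 ^ 5) powr \<sigma> * (\<Prod>j\<in>{1..5}. jb (K j)) powr \<sigma>"
    using jb_Max_le_prod[OF K \<epsilon>] \<sigma> by (simp add: powr_mono2 flip: powr_mult)
  have "multiplier \<beta> k K \<le> jb k powr (1/2) * (A * ?M powr \<sigma> / (jb k * ?m)) * (\<Prod>j\<in>{1..5}. jb (K j) powr (-1/2))"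
    unfolding multiplier_def using bound by (intro mult_right_mono mult_left_mono) (simp_all add: prod_nonneg)
  also have "\<dots> = A * ?Q * (jb k powr (-1/2) * ?M powr \<sigma>)"
  proof -
    have h1: "jb k powr (-1/2) = jb k powr (1/2) / jb k"
      using powr_diff[of "jb k" "1/2" 1] by simp
    have h2: "?m powr (-1) = 1 / ?m"
      by (simp add: powr_minus_divide)
    show ?thesis unfolding h1 h2 by (simp add: field_simps)
  qed
  also have "\<dots> \<le> A * ?Q * ((sqrt c * jb (K 5) powr (-1/2)) * ((sqrt 2 ^ 5) powr \<sigma> * (\<Prod>j\<in>{1..5}. jb (K j)) powr \<sigma>))"
    using A Q c by (intro mult_left_mono mult_mono[OF k M] mult_nonneg_nonneg) (simp_all add: prod_nonneg)
  also have "\<dots> = A * sqrt c * (sqrt 2 ^ 5) powr \<sigma> * majorant \<sigma> \<epsilon> K"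
  proof -
    have "(\<Prod>j\<in>{1..5}. jb (K j)) powr \<sigma> * (\<Prod>j\<in>{1..5}. jb (K j) powr (-1/2)) = (\<Prod>j\<in>{1..5}. jb (K j) powr (\<sigma> - 1/2))"
      by (simp add: prod_powr_distrib prod.distrib[symmetric] powr_add[symmetric])
    then show ?thesis unfolding majorant_def by (simp add: mult_ac)
  qed
  finally show ?thesis .
qed

lemma nn_integral_multiplier_powr_le:
  fixes \<beta> :: "int \<Rightarrow> (nat \<Rightarrow> int) \<Rightarrow> real"
  assumes \<epsilon>: "\<forall>j\<in>{1..5}. \<epsilon> j = 1 \<or> \<epsilon> j = -1" and c: "c > 0" and A: "A \<ge> 0" and \<sigma>: "\<sigma> \<ge> 0" and q: "q > 0"
    and supp: "\<forall>k K. \<beta> k K \<noteq> 0 \<longrightarrow> jb (K 5) \<le> c * jb k"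
    and bound: "\<forall>k K. \<bar>\<beta> k K\<bar> \<le> A * jb (real_of_int (Max ({\<bar>k\<bar>} \<union> (\<lambda>j. \<bar>K j\<bar>) ` {1..5}))) powr \<sigma>
                   / (jb k * jb (\<epsilon> 3 * K 3 + \<epsilon> 4 * K 4))"
  shows "(\<integral>\<^sup>+K. ennreal (multiplier \<beta> k K powr q) \<partial>count_space (hyperplane \<epsilon> k))
    \<le> ennreal ((A * sqrt c * (sqrt 2 ^ 5) powr \<sigma>) powr q) * majorant_bound \<sigma> q"
proof -
  let ?B = "A * sqrt c * (sqrt 2 ^ 5) powr \<sigma>"
  have "multiplier \<beta> k K powr q \<le> ?B powr q * majorant \<sigma> \<epsilon> K powr q" if "K \<in> hyperplane \<epsilon> k" for K
  proof -
    have "\<forall>j\<in>{1..5}. \<bar>\<epsilon> j\<bar> \<le> 1" using \<epsilon> by auto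
    then have "multiplier \<beta> k K \<le> ?B * majorant \<sigma> \<epsilon> K"
      using that c A \<sigma> supp bound by (intro multiplier_le_majorant) auto
    then show ?thesis using q multiplier_nonneg by (simp add: powr_mono2 flip: powr_mult)
  qed
  then have "(\<integral>\<^sup>+K. ennreal (multiplier \<beta> k K powr q) \<partial>count_space (hyperplane \<epsilon> k))
      \<le> (\<integral>\<^sup>+K. ennreal (?B powr q) * ennreal (majorant \<sigma> \<epsilon> K powr q) \<partial>count_space (hyperplane \<epsilon> k))"
    by (intro nn_integral_mono) (simp add: ennreal_mult[symmetric] ennreal_leI)
  also have "\<dots> = ennreal (?B powr q) * (\<integral>\<^sup>+K. ennreal (majorant \<sigma> \<epsilon> K powr q) \<partial>count_space (hyperplane \<epsilon> k))"
    by (simp add: nn_integral_cmult)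
  also have "\<dots> \<le> ennreal (?B powr q) * majorant_bound \<sigma> q"
    using \<epsilon> by (intro mult_left_mono nn_integral_majorant_powr_le) force+
  finally show ?thesis .
qed

section \<open>Estimates in the modulation variable\<close>

lemma borel_measurable_tilde:
  assumes "u k \<in> borel_measurable borel"
  shows "tilde u k \<in> borel_measurable borel"
proof -
  have "(\<lambda>x. u k (x - (real_of_int k)\<^sup>2)) \<in> borel_measurable borel"
    by (rule measurable_compose[OF _ assms]) measurable
  then show ?thesis unfolding tilde_def .
qed

lemma nn_integral_tilde_le_Lqk:
  fixes u :: "int \<Rightarrow> real \<Rightarrow> complex"
  assumes [measurable]: "u n \<in> borel_measurable borel" and r: "r > 1" "1/r + 1/r' = 1"
  shows "(\<integral>\<^sup>+lam. ennreal (cmod (tilde u n lam)) \<partial>lborel) \<le>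
     ennreal (jb n powr (- s)) * epow (jb_integral (b * r')) (1/r') * Lqk s b r u n"
proof -
  have r': "r' > 1" "1/r' + 1/r = 1" using conjugate_exponent_gt_1[OF r] r by simp_all
  define w where "w \<xi> = jb n powr s * jb (\<xi> + (real_of_int n)\<^sup>2) powr b" for \<xi>
  define v where "v \<xi> = jb n powr (- s) * jb (\<xi> + (real_of_int n)\<^sup>2) powr (- b)" for \<xi>
  have [measurable]: "w \<in> borel_measurable borel" "v \<in> borel_measurable borel"
    unfolding w_def v_def by measurable
  have "(\<integral>\<^sup>+lam. ennreal (cmod (tilde u n lam)) \<partial>lborel) = (\<integral>\<^sup>+\<xi>. ennreal (cmod (u n \<xi>)) \<partial>lborel)"
    using nn_integral_lborel_translate[of "\<lambda>\<xi>. ennreal (cmod (u n \<xi>))" "- (real_of_int n)\<^sup>2"]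
    by (simp add: tilde_def)
  also have "\<dots> = (\<integral>\<^sup>+\<xi>. ennreal (v \<xi>) * ennreal (w \<xi> * cmod (u n \<xi>)) \<partial>lborel)"
  proof (intro nn_integral_cong)
    fix \<xi>
    have "v \<xi> * w \<xi> = 1" by (simp add: w_def v_def powr_minus field_simps)
    then show "ennreal (cmod (u n \<xi>)) = ennreal (v \<xi>) * ennreal (w \<xi> * cmod (u n \<xi>))"
      by (simp add: w_def v_def ennreal_mult[symmetric] mult.assoc[symmetric])
  qed
  also have "\<dots> \<le> epow (\<integral>\<^sup>+\<xi>. epow (ennreal (v \<xi>)) r' \<partial>lborel) (1/r') *
                   epow (\<integral>\<^sup>+\<xi>. epow (ennreal (w \<xi> * cmod (u n \<xi>))) r \<partial>lborel) (1/r)"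
    by (rule nn_integral_Holder[OF r']) measurable
  also have "\<dots> = ennreal (jb n powr (- s)) * epow (jb_integral (b * r')) (1/r') *
                   Lqk s b r u n"
  proof -
    have "(\<integral>\<^sup>+\<xi>. epow (ennreal (v \<xi>)) r' \<partial>lborel) =
        (\<integral>\<^sup>+\<xi>. ennreal (jb n powr (- (s * r'))) * ennreal (jb (\<xi> + (real_of_int n)\<^sup>2) powr (- (b * r'))) \<partial>lborel)"
      by (intro nn_integral_cong) (simp add: v_def epow_ennreal powr_mult powr_powr ennreal_mult[symmetric])
    also have "\<dots> = ennreal (jb n powr (- (s * r'))) * jb_integral (b * r')"
      using nn_integral_lborel_translate[of "\<lambda>x. ennreal (jb x powr (- (b * r')))" "(real_of_int n)\<^sup>2"]
      by (simp add: nn_integral_cmult jb_integral_def)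
    finally have "epow (\<integral>\<^sup>+\<xi>. epow (ennreal (v \<xi>)) r' \<partial>lborel) (1/r') =
        ennreal (jb n powr (- s)) * epow (jb_integral (b * r')) (1/r')"
      using r' by (simp add: epow_mult epow_ennreal powr_powr)
    moreover have "epow (\<integral>\<^sup>+\<xi>. epow (ennreal (w \<xi> * cmod (u n \<xi>))) r \<partial>lborel) (1/r) = Lqk s b r u n"
      unfolding Lqk_def w_def by (simp add: epow_ennreal)
    ultimately show ?thesis by simp
  qed
  finally show ?thesis .
qed

lemma Lqk_le_of_decay:
  fixes U :: "int \<Rightarrow> real \<Rightarrow> complex"
  assumes q: "q > 0" and C: "C \<ge> 0"
    and decay: "\<And>lam. ennreal (cmod (tilde U k lam)) \<le> ennreal (C / jb lam powr a) * S"
  shows "Lqk s b q U k \<le>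
     ennreal (jb k powr s * C) * epow (jb_integral ((a - b) * q)) (1/q) * S"
proof -
  let ?J = "jb_integral ((a - b) * q)"
  have ab: "(b - a) * q = - ((a - b) * q)" by (simp add: algebra_simps)
  have "ennreal ((jb k powr s * jb (\<xi> + (real_of_int k)\<^sup>2) powr b * cmod (U k \<xi>)) powr q) \<le>
      ennreal ((jb k powr s * C) powr q) * ennreal (jb (\<xi> + (real_of_int k)\<^sup>2) powr ((b - a) * q)) * epow S q" for \<xi>
  proof -
    let ?lam = "\<xi> + (real_of_int k)\<^sup>2"
    have "ennreal (jb k powr s * jb ?lam powr b * cmod (U k \<xi>)) \<le>
        ennreal (jb k powr s * jb ?lam powr b) * (ennreal (C / jb ?lam powr a) * S)"
      using decay[of ?lam] by (simp add: tilde_def ennreal_mult mult_left_mono)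
    also have "\<dots> = ennreal (jb k powr s * C * jb ?lam powr (b - a)) * S"
    proof -
      have "jb ?lam powr (b - a) = jb ?lam powr b / jb ?lam powr a"
        by (simp add: powr_diff)
      then have "jb k powr s * jb ?lam powr b * (C / jb ?lam powr a) = jb k powr s * C * jb ?lam powr (b - a)"
        by simp
      then show ?thesis
        using C by (simp add: ennreal_mult[symmetric] mult.assoc[symmetric])
    qed
    finally have "epow (ennreal (jb k powr s * jb ?lam powr b * cmod (U k \<xi>))) q \<le>
        epow (ennreal (jb k powr s * C * jb ?lam powr (b - a)) * S) q"
      using q by (intro epow_mono)
    also have "\<dots> = ennreal ((jb k powr s * C) powr q) * ennreal (jb ?lam powr ((b - a) * q)) * epow S q"
      using q C by (simp add: epow_mult epow_ennreal powr_mult powr_powr ennreal_mult)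
    finally show ?thesis by (simp add: epow_ennreal)
  qed
  then have "Lqk s b q U k \<le> epow (\<integral>\<^sup>+\<xi>. ennreal ((jb k powr s * C) powr q) *
      ennreal (jb (\<xi> + (real_of_int k)\<^sup>2) powr ((b - a) * q)) * epow S q \<partial>lborel) (1/q)"
    unfolding Lqk_def using q by (intro epow_mono nn_integral_mono) auto
  also have "\<dots> = epow (ennreal ((jb k powr s * C) powr q) * ?J * epow S q) (1/q)"
    using nn_integral_lborel_translate[of "\<lambda>x. ennreal (jb x powr ((b - a) * q))" "(real_of_int k)\<^sup>2"]
    by (simp add: nn_integral_cmult nn_integral_multc jb_integral_def ab)
  also have "\<dots> = ennreal (jb k powr s * C) * epow ?J (1/q) * S"
    using q C by (simp add: epow_mult epow_ennreal epow_epow powr_powr)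
  finally show ?thesis .
qed

section \<open>The quintilinear estimate\<close>

lemma nn_integral_PiM_tilde:
  assumes "finite J" and "\<And>j. j \<in> J \<Longrightarrow> v j (K j) \<in> borel_measurable borel"
  shows "(\<integral>\<^sup>+\<Lambda>. (\<Prod>j\<in>J. ennreal (cmod (tilde (v j) (K j) (\<Lambda> j)))) \<partial>PiM J (\<lambda>_. lborel))
      = (\<Prod>j\<in>J. \<integral>\<^sup>+lam. ennreal (cmod (tilde (v j) (K j) lam)) \<partial>lborel)"
proof -
  interpret product_sigma_finite "\<lambda>_. lborel :: real measure" ..
  show ?thesis
  proof (rule product_nn_integral_prod[OF assms(1)])
    fix j assume "j \<in> J"
    then have [measurable]: "tilde (v j) (K j) \<in> borel_measurable borel"
      using assms(2) by (intro borel_measurable_tilde)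
    show "(\<lambda>lam. ennreal (cmod (tilde (v j) (K j) lam))) \<in> borel_measurable lborel"
      by simp
  qed
qed

lemma nn_integral_tilde_le_Y0:
  assumes "u n \<in> borel_measurable borel" and \<delta>: "0 < \<delta>" "\<delta> < 1/2"
  shows "(\<integral>\<^sup>+lam. ennreal (cmod (tilde u n lam)) \<partial>lborel) \<le>
    epow (jb_integral (1 / (1 - 2 * \<delta>))) (1/2 - \<delta>) * (ennreal (jb n powr (-1/2)) * Lqk (1/2) (1/2) (1 / (1/2 + \<delta>)) u n)"
proof -
  have "1 / (1/2 + \<delta>) > 1" "1 / (1 / (1/2 + \<delta>)) + 1 / (1 / (1/2 - \<delta>)) = 1"
    "1/2 * (1 / (1/2 - \<delta>)) = 1 / (1 - 2 * \<delta>)"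
    using \<delta> by (simp_all add: field_simps)
  then show ?thesis
    using nn_integral_tilde_le_Lqk[where u = u and n = n and r = "1 / (1/2 + \<delta>)" and r' = "1 / (1/2 - \<delta>)"
        and s = "1/2" and b = "1/2", OF assms(1)]
    by (simp add: mult_ac)
qed

lemma nn_integral_multiplier_eq:
  "ennreal (jb k powr (1/2)) *
     (\<integral>\<^sup>+K. ennreal \<bar>\<beta> k K\<bar> * (\<Prod>j\<in>{1..5}. ennreal (jb (K j) powr (-1/2)) * L j (K j)) \<partial>count_space X) =
   (\<integral>\<^sup>+K. ennreal (multiplier \<beta> k K) * (\<Prod>j\<in>{1..5}. L j (K j)) \<partial>count_space X)"
proof -
  have "ennreal (jb k powr (1/2)) * (ennreal \<bar>\<beta> k K\<bar> * (\<Prod>j\<in>{1..5}. ennreal (jb (K j) powr (-1/2)) * L j (K j))) =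
      ennreal (multiplier \<beta> k K) * (\<Prod>j\<in>{1..5}. L j (K j))" for K
    by (simp add: multiplier_def prod.distrib prod_ennreal ennreal_mult prod_nonneg mult_ac)
  then show ?thesis by (subst nn_integral_cmult[symmetric]) simp_all
qed

lemma Lqk_quintilinear_le_convolution:
  fixes R :: "(nat \<Rightarrow> int \<Rightarrow> real \<Rightarrow> complex) \<Rightarrow> int \<Rightarrow> real \<Rightarrow> complex"
    and \<beta> :: "int \<Rightarrow> (nat \<Rightarrow> int) \<Rightarrow> real"
  assumes \<delta>: "0 < \<delta>" "\<delta> < 1/2" and C: "C \<ge> 0"
    and vm: "\<And>j n. j \<in> {1..5} \<Longrightarrow> v j n \<in> borel_measurable borel"
    and R: "\<And>lam. ennreal (cmod (tilde (R v) k lam)) \<le> ennreal (C / jb lam powr (1 + 10 * \<delta>)) *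
      (\<integral>\<^sup>+K. ennreal \<bar>\<beta> k K\<bar> *
         (\<integral>\<^sup>+\<Lambda>. (\<Prod>j\<in>{1..5}. ennreal (cmod (tilde (v j) (K j) (\<Lambda> j)))) \<partial>PiM {1..5} (\<lambda>_. lborel))
       \<partial>count_space (hyperplane \<epsilon> k))"
  shows "Lqk (1/2) (1 - \<delta>) (1 / (4 * \<delta>)) (R v) k \<le>
    ennreal C * epow (jb_integral (11/4)) (4 * \<delta>) * epow (jb_integral (1 / (1 - 2 * \<delta>))) (1/2 - \<delta>) ^ 5 *
    (\<integral>\<^sup>+K. ennreal (multiplier \<beta> k K) * (\<Prod>j\<in>{1..5}. Lqk (1/2) (1/2) (1 / (1/2 + \<delta>)) (v j) (K j))
      \<partial>count_space (hyperplane \<epsilon> k))"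
proof -
  let ?L = "\<lambda>j n. Lqk (1/2) (1/2) (1 / (1/2 + \<delta>)) (v j) n"
  let ?I = "\<lambda>j n. \<integral>\<^sup>+lam. ennreal (cmod (tilde (v j) n lam)) \<partial>lborel"
  let ?c = "epow (jb_integral (1 / (1 - 2 * \<delta>))) (1/2 - \<delta>)"
  let ?S = "\<integral>\<^sup>+K. ennreal \<bar>\<beta> k K\<bar> * (\<Prod>j\<in>{1..5}. ?I j (K j)) \<partial>count_space (hyperplane \<epsilon> k)"
  let ?T = "\<integral>\<^sup>+K. ennreal \<bar>\<beta> k K\<bar> * (\<Prod>j\<in>{1..5}. ennreal (jb (K j) powr (-1/2)) * ?L j (K j))
      \<partial>count_space (hyperplane \<epsilon> k)"
  have "Lqk (1/2) (1 - \<delta>) (1 / (4 * \<delta>)) (R v) k \<le>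
      ennreal (jb k powr (1/2) * C) * epow (jb_integral (11/4)) (4 * \<delta>) * ?S"
  proof -
    have R': "ennreal (cmod (tilde (R v) k lam)) \<le> ennreal (C / jb lam powr (1 + 10 * \<delta>)) * ?S" for lam
      using R[of lam] by (simp only: nn_integral_PiM_tilde[OF finite_atLeastAtMost vm])
    have e: "(1 + 10 * \<delta> - (1 - \<delta>)) * (1 / (4 * \<delta>)) = 11/4" "1 / (1 / (4 * \<delta>)) = 4 * \<delta>"
      using \<delta> by (simp_all add: field_simps)
    have "0 < 1 / (4 * \<delta>)" using \<delta> by simp
    from Lqk_le_of_decay[where s = "1/2" and b = "1 - \<delta>", OF this C R'] show ?thesis
      unfolding e .
  qed
  also have "\<dots> \<le> ennreal (jb k powr (1/2) * C) * epow (jb_integral (11/4)) (4 * \<delta>) * (?c ^ 5 * ?T)"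
  proof (intro mult_left_mono)
    have I: "?I j n \<le> ?c * (ennreal (jb n powr (-1/2)) * ?L j n)" if "j \<in> {1..5}" for j n
      using nn_integral_tilde_le_Y0[OF vm[OF that] \<delta>] .
    have "(\<Prod>j\<in>{1..5}. ?I j (K j)) \<le> (\<Prod>j\<in>{1..5::nat}. ?c * (ennreal (jb (K j) powr (-1/2)) * ?L j (K j)))" for K
      using I by (intro prod_mono_ennreal) auto
    then have "(\<Prod>j\<in>{1..5}. ?I j (K j)) \<le> ?c ^ 5 * (\<Prod>j\<in>{1..5}. ennreal (jb (K j) powr (-1/2)) * ?L j (K j))" for K
      by (simp add: prod.distrib)
    then show "?S \<le> ?c ^ 5 * ?T"
      by (simp add: nn_integral_cmult[symmetric] mult.left_commute mult_left_mono nn_integral_mono)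
  qed simp
  also have "\<dots> = ennreal C * epow (jb_integral (11/4)) (4 * \<delta>) * ?c ^ 5 * (ennreal (jb k powr (1/2)) * ?T)"
    using C by (simp add: ennreal_mult mult_ac)
  also have "\<dots> = ennreal C * epow (jb_integral (11/4)) (4 * \<delta>) * ?c ^ 5 *
    (\<integral>\<^sup>+K. ennreal (multiplier \<beta> k K) * (\<Prod>j\<in>{1..5}. ?L j (K j)) \<partial>count_space (hyperplane \<epsilon> k))"
    by (simp only: nn_integral_multiplier_eq[where L = ?L])
  finally show ?thesis .
qed

lemma hyperplane_eq: "hyperplane \<epsilon> k = {K. (\<forall>j. j \<notin> {1..5} \<longrightarrow> K j = 0) \<and> (\<Sum>j\<in>{1..5}. \<epsilon> j * K j) = k}"
  by (auto simp: hyperplane_def supported_on_def)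

lemma small_delta_exponents:
  fixes p \<delta> :: real
  assumes p: "p > 1" and \<delta>: "0 < \<delta>" "2 * sqrt \<delta> * p < 1"
  shows "\<delta> < 1/2" and "(1 - 2 * sqrt \<delta>) * (p / (p - 1)) > 1"
proof -
  have "2 * sqrt \<delta> * 1 \<le> 2 * sqrt \<delta> * p" using \<delta> p by (intro mult_left_mono) auto
  then have "sqrt \<delta> < sqrt (1/4)" using \<delta>(2) by (simp add: real_sqrt_divide)
  then show "\<delta> < 1/2" by simp
  have "(1 - 2 * sqrt \<delta>) * p > p - 1" using \<delta>(2) by (simp add: algebra_simps)
  then show "(1 - 2 * sqrt \<delta>) * (p / (p - 1)) > 1" using p by (simp add: field_simps)
qed

(* The factors come from the decay of the output in the modulation variable, from Hoelder's
   inequality in the modulation variables of the five inputs, and from the l^p' bound of the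
   multiplier on the hyperplanes. *)
definition estimate_constant :: "real \<Rightarrow> real \<Rightarrow> real \<Rightarrow> real \<Rightarrow> real \<Rightarrow> ennreal" where
  "estimate_constant p \<delta> C A c =
     ennreal C * epow (jb_integral (11/4)) (4 * \<delta>) * epow (jb_integral (1 / (1 - 2 * \<delta>))) (1/2 - \<delta>) ^ 5 *
     epow (ennreal ((A * sqrt c * (sqrt 2 ^ 5) powr sqrt \<delta>) powr (p / (p - 1))) *
           majorant_bound (sqrt \<delta>) (p / (p - 1))) ((p - 1) / p)"

lemma estimate_constant_finite:
  assumes "p > 1" "0 < \<delta>" "2 * sqrt \<delta> * p < 1"
  shows "estimate_constant p \<delta> C A c \<noteq> \<top>"
proof -
  note exps = small_delta_exponents[OF assms]
  have "jb_integral (1 / (1 - 2 * \<delta>)) \<noteq> \<top>"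
    using exps assms(2) by (intro less_imp_neq jb_integral_finite) (simp add: field_simps)
  moreover have "jb_integral (11/4) \<noteq> \<top>" by (intro less_imp_neq jb_integral_finite) simp
  moreover have "majorant_bound (sqrt \<delta>) (p / (p - 1)) \<noteq> \<top>"
    using exps assms by (intro majorant_bound_finite) auto
  ultimately show ?thesis
    unfolding estimate_constant_def by (simp add: ennreal_mult_eq_top_iff power_eq_top_ennreal)
qed

lemma Xnorm_quintilinear_le:
  fixes \<epsilon> :: "nat \<Rightarrow> int" and \<beta> :: "int \<Rightarrow> (nat \<Rightarrow> int) \<Rightarrow> real"
    and R :: "(nat \<Rightarrow> int \<Rightarrow> real \<Rightarrow> complex) \<Rightarrow> int \<Rightarrow> real \<Rightarrow> complex"
  assumes p: "p > 1" and \<delta>: "0 < \<delta>" "2 * sqrt \<delta> * p < 1" and C: "C \<ge> 0" and A: "A \<ge> 0" and c: "c > 0"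
    and \<epsilon>: "\<forall>j\<in>{1..5}. \<epsilon> j = 1 \<or> \<epsilon> j = -1"
    and supp: "\<forall>k K. \<beta> k K \<noteq> 0 \<longrightarrow> jb (real_of_int (K 5)) \<le> c * jb (real_of_int k)"
    and bound: "\<forall>k K. \<bar>\<beta> k K\<bar> \<le> A * jb (real_of_int (Max ({\<bar>k\<bar>} \<union> (\<lambda>j. \<bar>K j\<bar>) ` {1..5}))) powr (sqrt \<delta>)
                 / (jb (real_of_int k) * jb (real_of_int (\<epsilon> 3 * K 3 + \<epsilon> 4 * K 4)))"
    and vm: "\<And>j n. j \<in> {1..5} \<Longrightarrow> v j n \<in> borel_measurable borel"
    and R: "\<And>k lam. ennreal (cmod (tilde (R v) k lam)) \<le> ennreal (C / jb lam powr (1 + 10 * \<delta>)) *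
         (\<integral>\<^sup>+K. ennreal \<bar>\<beta> k K\<bar> *
            (\<integral>\<^sup>+\<Lambda>. (\<Prod>j\<in>{1..5}. ennreal (cmod (tilde (v j) (K j) (\<Lambda> j)))) \<partial>PiM {1..5} (\<lambda>_. lborel))
          \<partial>count_space (hyperplane \<epsilon> k))"
  shows "Xnorm (1/2) (1 - \<delta>) p (1 / (4 * \<delta>)) (R v)
    \<le> estimate_constant p \<delta> C A c * (\<Prod>j\<in>{1..5}. Xnorm (1/2) (1/2) p (1 / (1/2 + \<delta>)) (v j))"
proof -
  define q where "q = p / (p - 1)"
  have pq: "1/p + 1/q = 1" and q: "q > 1" and q': "1/q = (p - 1) / p"
    using p by (simp_all add: q_def field_simps)
  let ?c = "ennreal C * epow (jb_integral (11/4)) (4 * \<delta>) * epow (jb_integral (1 / (1 - 2 * \<delta>))) (1/2 - \<delta>) ^ 5"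
  let ?M = "ennreal ((A * sqrt c * (sqrt 2 ^ 5) powr sqrt \<delta>) powr q) * majorant_bound (sqrt \<delta>) q"
  let ?L = "\<lambda>j. Lqk (1/2) (1/2) (1 / (1/2 + \<delta>)) (v j)"
  have W: "(\<integral>\<^sup>+K. epow (ennreal (multiplier \<beta> k K)) q \<partial>count_space (hyperplane \<epsilon> k)) \<le> ?M" for k
    using nn_integral_multiplier_powr_le[OF \<epsilon> c A _ _ supp bound] \<delta> q
    by (simp add: epow_ennreal multiplier_nonneg)
  have "Xnorm (1/2) (1 - \<delta>) p (1 / (4 * \<delta>)) (R v) \<le>
      ?c * lp_norm p (\<lambda>k. \<integral>\<^sup>+K. ennreal (multiplier \<beta> k K) * (\<Prod>j\<in>{1..5}. ?L j (K j)) \<partial>count_space (hyperplane \<epsilon> k))"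
    unfolding Xnorm_eq_lp_norm using p \<delta> small_delta_exponents[OF p \<delta>] C vm R
    by (intro lp_norm_le_cmult Lqk_quintilinear_le_convolution) auto
  also have "\<dots> \<le> ?c * (epow ?M (1/q) * (\<Prod>j\<in>{1..5}. lp_norm p (?L j)))"
    using lp_norm_fibre_convolution_le[OF _ p pq W[unfolded hyperplane_def]]
    by (intro mult_left_mono) (simp_all add: hyperplane_def)
  also have "\<dots> = estimate_constant p \<delta> C A c * (\<Prod>j\<in>{1..5}. Xnorm (1/2) (1/2) p (1 / (1/2 + \<delta>)) (v j))"
    unfolding estimate_constant_def Xnorm_eq_lp_norm q' by (simp add: q_def mult_ac)
  finally show ?thesis .
qed

theorem proposition6p8:
  fixes p0 :: real
  assumes "p0 \<ge> 2"
  shows "\<exists>\<delta>0>0. \<forall>\<delta>. 0 < \<delta> \<and> \<delta> < \<delta>0 \<longrightarrow>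
    (\<forall>C A c :: real. C > 0 \<and> A > 0 \<and> c > 0 \<longrightarrow>
     (\<exists>C'::real. C' > 0 \<and>
       (\<forall>(\<epsilon>::nat \<Rightarrow> int) R (\<beta>::int \<Rightarrow> (nat \<Rightarrow> int) \<Rightarrow> real).
         (\<forall>j\<in>{1..5}. \<epsilon> j = 1 \<or> \<epsilon> j = -1) \<longrightarrow>
         multilinear5 R \<longrightarrow>
         (\<forall>k K. \<beta> k K \<noteq> 0 \<longrightarrow> jb (real_of_int (K 5)) \<le> c * jb (real_of_int k)) \<longrightarrow>
         (\<forall>k K. \<bar>\<beta> k K\<bar> \<le> A * jb (real_of_int (Max ({\<bar>k\<bar>} \<union> (\<lambda>j. \<bar>K j\<bar>) ` {1..5}))) powr (sqrt \<delta>)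
                 / (jb (real_of_int k) * jb (real_of_int (\<epsilon> 3 * K 3 + \<epsilon> 4 * K 4)))) \<longrightarrow>
         (\<forall>v. (\<forall>j\<in>{1..5}. \<forall>k. v j k \<in> borel_measurable lborel) \<longrightarrow>
            (\<forall>k lam. ennreal (cmod (tilde (R v) k lam)) \<le>
               ennreal (C / jb lam powr (1 + 10 * \<delta>)) *
               (\<integral>\<^sup>+ K. ennreal \<bar>\<beta> k K\<bar> *
                   (\<integral>\<^sup>+ \<Lambda>. (\<Prod>j\<in>{1..5}. ennreal (cmod (tilde (v j) (K j) (\<Lambda> j))))
                      \<partial>PiM {1..5} (\<lambda>_. lborel))
                 \<partial>count_space {K. (\<forall>j. j \<notin> {1..5} \<longrightarrow> K j = 0) \<and>
                                   (\<Sum>j\<in>{1..5}. \<epsilon> j * K j) = k}))) \<longrightarrow>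
         (\<forall>v. (\<forall>j\<in>{1..5}. \<forall>k. v j k \<in> borel_measurable lborel) \<longrightarrow>
            Xnorm (1/2) (1 - \<delta>) p0 (1 / (4 * \<delta>)) (R v)
              \<le> ennreal C' * (\<Prod>j\<in>{1..5}. Xnorm (1/2) (1/2) p0 (1 / (1/2 + \<delta>)) (v j))))))"
proof (rule exI[of _ "1 / (4 * p0\<^sup>2)"], intro conjI allI impI, goal_cases)
  case 1
  then show ?case using assms by simp
next
  case (2 \<delta> C A c)
  then have \<delta>: "0 < \<delta>" "\<delta> < 1 / (4 * p0\<^sup>2)" and CAc: "C > 0" "A > 0" "c > 0" by auto
  have "sqrt \<delta> < sqrt (1 / (4 * p0\<^sup>2))" using \<delta> by simp
  also have "\<dots> = 1 / (2 * p0)" using assms by (simp add: real_sqrt_divide real_sqrt_mult)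
  finally have \<delta>p0: "2 * sqrt \<delta> * p0 < 1" using assms by (simp add: field_simps)
  define C' where "C' = enn2real (estimate_constant p0 \<delta> C A c) + 1"
  have C': "estimate_constant p0 \<delta> C A c \<le> ennreal C'"
    using estimate_constant_finite[of p0 \<delta> C A c] assms \<delta> \<delta>p0 by (simp add: C'_def ennreal_enn2real_if)
  show ?case
  proof (rule exI[of _ C'], intro conjI allI impI, goal_cases)
    case 1
    show ?case unfolding C'_def using enn2real_nonneg by (simp add: add_nonneg_pos)
  next
    case (2 \<epsilon> R \<beta> v)
    have "Xnorm (1/2) (1 - \<delta>) p0 (1 / (4 * \<delta>)) (R v)
        \<le> estimate_constant p0 \<delta> C A c * (\<Prod>j\<in>{1..5}. Xnorm (1/2) (1/2) p0 (1 / (1/2 + \<delta>)) (v j))"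
      by (rule Xnorm_quintilinear_le) (use assms \<delta> CAc \<delta>p0 2 in \<open>auto simp: hyperplane_eq\<close>)
    then show ?case using C' by (auto elim!: order_trans intro: mult_right_mono)
  qed
qed

end
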